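(* Let $p$ be a prime, $k\ge 1$, $q=p^k$, and $n\ge 1$. Then for every integer $i$ with $1\le i\le kn$, we have $p^{kn-i}\in\sigma\big(\mathrm{AGL}(n,q)\big)$.
   Context: For a finite group $G$ and a subgroup $H\le G$, a subset $\mathcal F\subseteq G$ is called $H$-intersecting if for all $g,g'\in\mathcal F$ there is $x\in G$ with $gxH=g'xH$ (equivalently $x^{-1}g'^{-1}gx\in H$). The intersection density is $\rho(G,H)=\max\{|\mathcal F|/|H| : \mathcal F\subseteq G \text{ is } H\text{-intersecting}\}$, and the intersection spectrum of $G$ is $\sigma(G)=\{\rho(G,H): H\le G\}$. $\mathrm{AGL}(n,q)$ is the group of affine maps $v\mapsto Av+b$ of $\mathbb F_q^n$ with $A\in\mathrm{GL}(n,q)$, $b\in\mathbb F_q^n$, written as pairs $(A,b)$ with product $(A,b)(A',b')=(AA',Ab'+b)$. *)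

theory Defs
  imports "HOL-Analysis.Analysis" "HOL-Algebra.Group"
begin

definition H_intersecting :: "('g, 'b) monoid_scheme \<Rightarrow> 'g set \<Rightarrow> 'g set \<Rightarrow> bool" where
  "H_intersecting G H F \<longleftrightarrow> F \<subseteq> carrier G \<and>
     (\<forall>g\<in>F. \<forall>g'\<in>F. \<exists>x\<in>carrier G.
        inv\<^bsub>G\<^esub> x \<otimes>\<^bsub>G\<^esub> inv\<^bsub>G\<^esub> g' \<otimes>\<^bsub>G\<^esub> g \<otimes>\<^bsub>G\<^esub> x \<in> H)"

definition intersection_density :: "('g, 'b) monoid_scheme \<Rightarrow> 'g set \<Rightarrow> real" where
  "intersection_density G H =
     Max {real (card F) / real (card H) | F. H_intersecting G H F}"

definition intersection_spectrum :: "('g, 'b) monoid_scheme \<Rightarrow> real set" where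
  "intersection_spectrum G = {intersection_density G H | H. subgroup H G}"

definition AGL :: "(('a::field ^ 'n ^ 'n) \<times> ('a ^ 'n)) monoid" where
  "AGL = \<lparr> carrier = {(A, b). invertible A},
           mult = (\<lambda>(A, b) (A', b'). (A ** A', A *v b' + b)),
           one = (mat 1, 0) \<rparr>"

end

theory Submission
  imports Defs "HOL-Number_Theory.Residues"
begin

text \<open>In any group G, let H lie in a normal subgroup N and meet every G-conjugacy class
  contained in N. Then N itself is H-intersecting, while an H-intersecting set lies in a single
  coset of N (the conjugates of \<open>g'\<^sup>-\<^sup>1g\<close> land in \<open>H \<subseteq> N\<close>), so \<open>\<rho>(G,H) = |N|/|H|\<close>.
  In AGL(n,q) take for N the translations and for H the translations by an additive subgroup
  of order \<open>p\<^sup>i\<close> (an \<open>F\<^sub>p\<close>-subspace of dimension \<open>i \<ge> 1\<close>). Since GL(n,q)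
  is transitive on nonzero vectors, H meets every conjugacy class of translations, and the
  density is \<open>q\<^sup>n/p\<^sup>i = p\<^sup>k\<^sup>n\<^sup>-\<^sup>i\<close>.\<close>

lemma (in group) normal_subgroup_H_intersecting:
  assumes "N \<lhd> G" and "H \<subseteq> N"
    and conj_into_H: "\<And>n. n \<in> N \<Longrightarrow> \<exists>x\<in>carrier G. inv x \<otimes> n \<otimes> x \<in> H"
  shows "H_intersecting G H N"
  unfolding H_intersecting_def
proof (intro conjI ballI)
  have N: "subgroup N G" using assms(1) by (rule normal_invE)
  then show N_carrier: "N \<subseteq> carrier G" by (rule subgroup.subset)
  fix g g' assume g: "g \<in> N" "g' \<in> N"
  then have "inv g' \<otimes> g \<in> N" using N by (intro subgroup.m_closed subgroup.m_inv_closed)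
  then obtain x where x: "x \<in> carrier G" "inv x \<otimes> (inv g' \<otimes> g) \<otimes> x \<in> H"
    using conj_into_H by blast
  have "inv x \<otimes> inv g' \<otimes> g \<otimes> x = inv x \<otimes> (inv g' \<otimes> g) \<otimes> x"
    using x(1) g N_carrier by (simp add: m_assoc subsetD)
  with x show "\<exists>x\<in>carrier G. inv x \<otimes> inv g' \<otimes> g \<otimes> x \<in> H"
    by metis
qed

lemma (in group) H_intersecting_card_le:
  assumes "finite N" "N \<lhd> G" "H \<subseteq> N" "H_intersecting G H F"
  shows "card F \<le> card N"
proof (cases "F = {}")
  case False
  then obtain g0 where g0: "g0 \<in> F" by blast
  have F: "F \<subseteq> carrier G" using assms(4) unfolding H_intersecting_def by blast
  have "inv g0 \<otimes> g \<in> N" if "g \<in> F" for g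
  proof -
    obtain x where x: "x \<in> carrier G" "inv x \<otimes> inv g0 \<otimes> g \<otimes> x \<in> H"
      using assms(4) g0 \<open>g \<in> F\<close> unfolding H_intersecting_def by blast
    then have "x \<otimes> (inv x \<otimes> inv g0 \<otimes> g \<otimes> x) \<otimes> inv x \<in> N"
      using assms(2,3) normal_invE(2) by blast
    moreover have "x \<otimes> (inv x \<otimes> inv g0 \<otimes> g \<otimes> x) \<otimes> inv x = inv g0 \<otimes> g"
      using x(1) F g0 \<open>g \<in> F\<close> by (simp add: m_assoc subsetD) (simp add: m_assoc[symmetric] subsetD)
    ultimately show ?thesis by simp
  qed
  moreover have "inj_on (\<lambda>g. inv g0 \<otimes> g) F"
    using F g0 by (intro inj_onI) (metis Units_eq Units_l_cancel inv_closed subsetD)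
  ultimately show ?thesis by (intro card_inj_on_le[OF _ _ assms(1)]) auto
qed simp

lemma (in group) intersection_density_normal_subgroup:
  assumes "finite (carrier G)" "N \<lhd> G" "H \<subseteq> N"
    and "\<And>n. n \<in> N \<Longrightarrow> \<exists>x\<in>carrier G. inv x \<otimes> n \<otimes> x \<in> H"
  shows "intersection_density G H = card N / card H"
  unfolding intersection_density_def
proof (rule Max_eqI)
  have "{real (card F) / real (card H) | F. H_intersecting G H F}
          \<subseteq> (\<lambda>F. real (card F) / real (card H)) ` Pow (carrier G)"
    unfolding H_intersecting_def by blast
  then show "finite {real (card F) / real (card H) | F. H_intersecting G H F}"
    using assms(1) by (meson finite_Pow_iff finite_imageI finite_subset)
  have "finite N" using assms(1,2) normal_imp_subgroup subgroup.subset finite_subset by metis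
  then show "y \<le> real (card N) / real (card H)"
    if "y \<in> {real (card F) / real (card H) | F. H_intersecting G H F}" for y
    using that H_intersecting_card_le[OF _ assms(2,3)] by (auto intro: divide_right_mono)
  show "real (card N) / real (card H) \<in> {real (card F) / real (card H) | F. H_intersecting G H F}"
    using normal_subgroup_H_intersecting[OF assms(2-4)] by blast
qed

definition additive_subgroup_set :: "'v::ab_group_add set \<Rightarrow> bool" where
  "additive_subgroup_set S \<longleftrightarrow> 0 \<in> S \<and> (\<forall>x\<in>S. \<forall>y\<in>S. x + y \<in> S) \<and> (\<forall>x\<in>S. - x \<in> S)"

lemma additive_subgroup_set_of_int_smult:
  fixes x :: "'a::ring_1^'n"
  assumes S: "additive_subgroup_set S" and "x \<in> S"
  shows "of_int m *s x \<in> S"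
proof -
  have nat: "of_nat n *s x \<in> S" for n
    by (induction n) (use S \<open>x \<in> S\<close> in \<open>auto simp: additive_subgroup_set_def\<close>)
  show ?thesis
  proof (cases m rule: int_cases)
    case (neg n)
    then have "of_int m *s x = - (of_nat (Suc n) *s x)" by (simp add: vec_eq_iff)
    with nat S show ?thesis unfolding additive_subgroup_set_def by metis
  qed (use nat in simp)
qed

lemma additive_subgroup_set_of_int_smult_cancel:
  fixes v :: "'a::field^'n"
  assumes "prime CHAR('a)" "additive_subgroup_set S"
    and "of_int c *s v \<in> S" "\<not> int CHAR('a) dvd c"
  shows "v \<in> S"
proof -
  have "coprime c (int CHAR('a))"
    using assms(1,4) prime_imp_coprime[of "int CHAR('a)" c] by (simp add: coprime_commute)
  then obtain e where "[c * e = 1] (mod int CHAR('a))" using cong_solve_coprime_int by blast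
  then have "of_int e * of_int c = (1 :: 'a)"
    unfolding of_int_eq_iff_cong_CHAR[symmetric] by (simp add: mult.commute)
  then have "v = of_int e *s (of_int c *s v)"
    by (simp only: vector_smult_assoc vector_smult_lid)
  with assms(2,3) show ?thesis using additive_subgroup_set_of_int_smult by metis
qed

definition add_int_multiples :: "('a::ring_1^'n) set \<Rightarrow> 'a^'n \<Rightarrow> ('a^'n) set" where
  "add_int_multiples S v = (\<lambda>(s, m). s + of_int m *s v) ` (S \<times> UNIV)"

lemma additive_subgroup_set_add_int_multiples:
  assumes "additive_subgroup_set S"
  shows "additive_subgroup_set (add_int_multiples S v)"
  unfolding additive_subgroup_set_def
proof (intro conjI ballI)
  have "(0, 0) \<in> S \<times> UNIV" using assms unfolding additive_subgroup_set_def by simp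
  then show "0 \<in> add_int_multiples S v"
    unfolding add_int_multiples_def by (rule image_eqI[rotated]) simp
next
  fix x y assume "x \<in> add_int_multiples S v" "y \<in> add_int_multiples S v"
  then obtain s m s' m' where xy: "x = s + of_int m *s v" "y = s' + of_int m' *s v" "s \<in> S" "s' \<in> S"
    unfolding add_int_multiples_def by auto
  then have sum: "x + y = (s + s') + of_int (m + m') *s v" "- x = - s + of_int (- m) *s v"
    by (simp_all add: vec_eq_iff algebra_simps)
  from xy assms have mem: "(s + s', m + m') \<in> S \<times> UNIV" "(- s, - m) \<in> S \<times> UNIV"
    unfolding additive_subgroup_set_def by auto
  show "x + y \<in> add_int_multiples S v" "- x \<in> add_int_multiples S v"
    unfolding add_int_multiples_def by (rule rev_image_eqI[OF mem(1)] rev_image_eqI[OF mem(2)], simp add: sum)+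
qed

lemma card_add_int_multiples:
  fixes S :: "('a::field^'n) set"
  assumes "prime CHAR('a)" "additive_subgroup_set S" "v \<notin> S"
  shows "card (add_int_multiples S v) = CHAR('a) * card S"
proof -
  define p where "p = int CHAR('a)"
  define f where "f = (\<lambda>(s, m). s + of_int m *s v)"
  have "p > 0" using assms(1) prime_gt_0_nat unfolding p_def by simp
  have "inj_on f (S \<times> {0..<p})"
  proof (rule inj_onI, clarify)
    fix s m s' m' assume st: "s \<in> S" "m \<in> {0..<p}" "s' \<in> S" "m' \<in> {0..<p}" "f (s, m) = f (s', m')"
    have "m = m'"
    proof (rule ccontr)
      assume "m \<noteq> m'"
      with st(2,4) \<open>p > 0\<close> have "\<not> p dvd (m - m')"
        using dvd_imp_le_int[of "m - m'" p] by auto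
      moreover have "of_int (m - m') *s v = s' - s"
        using st(5) unfolding f_def by (simp add: vec_eq_iff algebra_simps)
      then have "of_int (m - m') *s v \<in> S"
        using assms(2) st(1,3) unfolding additive_subgroup_set_def by (metis diff_conv_add_uminus)
      ultimately show False
        using additive_subgroup_set_of_int_smult_cancel[OF assms(1,2)] assms(3) unfolding p_def by metis
    qed
    with st(5) show "s = s' \<and> m = m'" unfolding f_def by simp
  qed
  moreover have "add_int_multiples S v = f ` (S \<times> {0..<p})"
  proof
    show "add_int_multiples S v \<subseteq> f ` (S \<times> {0..<p})"
    proof (clarsimp simp: add_int_multiples_def)
      fix s m assume "s \<in> S"
      \<comment> \<open>the multiple only depends on m modulo the characteristic\<close>
      have "f (s, m) = f (s, m mod p)"
        unfolding f_def using of_int_eq_iff_cong_CHAR[of m "m mod p", where 'a='a]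
        by (simp add: p_def cong_def)
      moreover have "(s, m mod p) \<in> S \<times> {0..<p}" using \<open>s \<in> S\<close> \<open>p > 0\<close> by simp
      ultimately show "s + of_int m *s v \<in> f ` (S \<times> {0..<p})" unfolding f_def by force
    qed
  qed (auto simp: add_int_multiples_def f_def)
  ultimately show ?thesis by (simp add: card_image card_cartesian_product p_def)
qed

lemma additive_subgroup_set_card_CHAR_power:
  assumes "CHAR('a::{field,finite}) ^ m \<le> CARD('a^'n::finite)"
  shows "\<exists>S :: ('a^'n) set. additive_subgroup_set S \<and> card S = CHAR('a) ^ m"
  using assms
proof (induction m)
  case 0
  have "additive_subgroup_set ({0} :: ('a^'n) set)" by (simp add: additive_subgroup_set_def)
  then show ?case by (intro exI[of _ "{0}"]) simp
next
  case (Suc m)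
  have p: "prime CHAR('a)" by (simp add: prime_CHAR_semidom finite_imp_CHAR_pos)
  then have less: "CHAR('a) ^ m < CHAR('a) ^ Suc m" using prime_gt_1_nat[OF p] by simp
  with Suc.prems have "CHAR('a) ^ m \<le> CARD('a^'n)" by linarith
  then obtain S :: "('a^'n) set" where S: "additive_subgroup_set S" "card S = CHAR('a) ^ m"
    using Suc.IH by blast
  then have "S \<noteq> UNIV" using Suc.prems less by auto
  then obtain v where "v \<notin> S" by blast
  then show ?case
    using additive_subgroup_set_add_int_multiples[OF S(1)] card_add_int_multiples[OF p S(1)] S(2)
    by (intro exI[of _ "add_int_multiples S v"]) simp
qed

lemma CHAR_of_card_prime_power:
  assumes "prime p" "CARD('a::{field,finite}) = p ^ k"
  shows "CHAR('a) = p"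
proof -
  have "prime CHAR('a)" by (simp add: prime_CHAR_semidom finite_imp_CHAR_pos)
  moreover have "CHAR('a) dvd p ^ k" using CHAR_dvd_CARD[where 'a='a] assms(2) by simp
  ultimately show ?thesis using assms(1) prime_dvd_power primes_dvd_imp_eq by blast
qed

lemma invertible_mat_1: "invertible (mat 1 :: 'a::field^'n^'n)"
  unfolding invertible_def by (metis matrix_mul_lid)

lemma
  fixes A :: "'a::field^'n^'n"
  assumes "invertible A"
  shows matrix_inv_left: "matrix_inv A ** A = mat 1"
    and invertible_matrix_inv: "invertible (matrix_inv A)"
proof -
  have "A ** matrix_inv A = mat 1 \<and> matrix_inv A ** A = mat 1"
    using assms unfolding invertible_def matrix_inv_def by (rule someI_ex)
  then show "matrix_inv A ** A = mat 1" "invertible (matrix_inv A)"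
    unfolding invertible_def by blast+
qed

lemma matrix_inv_mat_1 [simp]: "matrix_inv (mat 1 :: 'a::field^'n^'n) = mat 1"
  by (metis invertible_mat_1 matrix_inv_left matrix_mul_rid)

definition rank_one_update :: "'a::field^'n \<Rightarrow> 'a^'n \<Rightarrow> 'n \<Rightarrow> 'a^'n^'n" where
  "rank_one_update u w j =
     (\<chi> i l. (if i = l then 1 else 0) + (w$i - u$i) * (if l = j then inverse (u$j) else 0))"

lemma rank_one_update_apply:
  "(rank_one_update u w j *v x) $ i = x$i + (w$i - u$i) * (x$j / u$j)"
proof -
  have "(rank_one_update u w j *v x) $ i
          = (\<Sum>l\<in>UNIV. (if i = l then x$l else 0) + (w$i - u$i) * (if l = j then x$l / u$j else 0))"
    unfolding rank_one_update_def matrix_vector_mult_def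
    by (auto intro!: sum.cong simp: distrib_left divide_inverse mult.commute mult.left_commute)
  also have "\<dots> = x$i + (w$i - u$i) * (x$j / u$j)"
    by (simp only: sum.distrib sum_distrib_left[symmetric]) simp
  finally show ?thesis .
qed

lemma rank_one_update_maps: "u$j \<noteq> 0 \<Longrightarrow> rank_one_update u w j *v u = w"
  by (simp add: vec_eq_iff rank_one_update_apply)

lemma invertible_rank_one_update:
  assumes "u$j \<noteq> 0" "w$j \<noteq> 0"
  shows "invertible (rank_one_update u w j)"
  unfolding invertible_left_inverse matrix_left_invertible_ker
proof (intro allI impI)
  fix x assume "rank_one_update u w j *v x = 0"
  then have x: "\<And>i. x$i + (w$i - u$i) * (x$j / u$j) = 0"
    by (metis rank_one_update_apply zero_index)
  from x[of j] assms have "x$j = 0"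
    by (simp add: field_simps)
  with x show "x = 0" by (simp add: vec_eq_iff)
qed

lemma invertible_matrix_maps_nonzero:
  fixes s d :: "'a::field^'n"
  assumes "s \<noteq> 0" "d \<noteq> 0"
  obtains A where "invertible A" "A *v s = d"
proof -
  obtain j where j: "s$j \<noteq> 0" using assms(1) by (metis vec_eq_iff zero_index)
  obtain j' where j': "d$j' \<noteq> 0" using assms(2) by (metis vec_eq_iff zero_index)
  define u :: "'a^'n" where "u = (\<chi> l. if l = j \<or> l = j' then 1 else 0)"
  have u: "u$j \<noteq> 0" "u$j' \<noteq> 0" by (simp_all add: u_def)
  \<comment> \<open>pass through a vector that is nonzero in both coordinates j and j'\<close>
  show thesis
  proof
    show "invertible (rank_one_update u d j' ** rank_one_update s u j)"
      by (intro invertible_mult invertible_rank_one_update) (use u j j' in auto)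
    show "(rank_one_update u d j' ** rank_one_update s u j) *v s = d"
      by (simp add: matrix_vector_mul_assoc[symmetric] rank_one_update_maps j u)
  qed
qed

lemma AGL_mult [simp]: "(A, b) \<otimes>\<^bsub>AGL\<^esub> (A', b') = (A ** A', A *v b' + b)"
  by (simp add: AGL_def)

lemma AGL_one [simp]: "\<one>\<^bsub>AGL\<^esub> = (mat 1, 0)"
  by (simp add: AGL_def)

lemma AGL_carrier [simp]: "x \<in> carrier AGL \<longleftrightarrow> invertible (fst x)"
  by (cases x) (simp add: AGL_def)

lemma group_AGL: "group (AGL :: (('a::field ^ 'n ^ 'n) \<times> ('a ^ 'n)) monoid)"
proof (rule groupI)
  fix x y :: "('a ^ 'n ^ 'n) \<times> ('a ^ 'n)"
  assume "x \<in> carrier AGL" "y \<in> carrier AGL"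
  then show "x \<otimes>\<^bsub>AGL\<^esub> y \<in> carrier AGL"
    by (cases x, cases y) (auto simp: invertible_mult)
next
  show "\<one>\<^bsub>AGL\<^esub> \<in> carrier (AGL :: (('a ^ 'n ^ 'n) \<times> ('a ^ 'n)) monoid)"
    by (simp add: invertible_mat_1)
next
  fix x y z :: "('a ^ 'n ^ 'n) \<times> ('a ^ 'n)"
  show "x \<otimes>\<^bsub>AGL\<^esub> y \<otimes>\<^bsub>AGL\<^esub> z = x \<otimes>\<^bsub>AGL\<^esub> (y \<otimes>\<^bsub>AGL\<^esub> z)"
    by (cases x, cases y, cases z)
       (simp add: matrix_mul_assoc matrix_vector_mul_assoc matrix_vector_right_distrib add.assoc)
next
  fix x :: "('a ^ 'n ^ 'n) \<times> ('a ^ 'n)"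
  show "\<one>\<^bsub>AGL\<^esub> \<otimes>\<^bsub>AGL\<^esub> x = x"
    by (cases x) simp
  assume "x \<in> carrier AGL"
  then obtain A b where x: "x = (A, b)" "invertible A" by (cases x) auto
  then have "(matrix_inv A, - (matrix_inv A *v b)) \<otimes>\<^bsub>AGL\<^esub> x = \<one>\<^bsub>AGL\<^esub>"
    by (simp add: matrix_inv_left)
  with x show "\<exists>y \<in> carrier AGL. y \<otimes>\<^bsub>AGL\<^esub> x = \<one>\<^bsub>AGL\<^esub>"
    by (intro bexI[of _ "(matrix_inv A, - (matrix_inv A *v b))"]) (auto simp: invertible_matrix_inv)
qed

lemma AGL_inv:
  fixes A :: "'a::field^'n^'n"
  assumes "invertible A"
  shows "inv\<^bsub>AGL\<^esub> (A, b) = (matrix_inv A, - (matrix_inv A *v b))"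
proof -
  interpret group AGL by (rule group_AGL)
  show ?thesis
    using assms by (intro inv_equality) (simp_all add: matrix_inv_left invertible_matrix_inv)
qed

lemma AGL_conj_translation:
  fixes X :: "'a::field^'n^'n"
  assumes "invertible X"
  shows "inv\<^bsub>AGL\<^esub> (X, c) \<otimes>\<^bsub>AGL\<^esub> (mat 1, d) \<otimes>\<^bsub>AGL\<^esub> (X, c) = (mat 1, matrix_inv X *v d)"
  using assms by (simp add: AGL_inv matrix_inv_left)

definition translation_group :: "('a::field ^ 'n) set \<Rightarrow> (('a ^ 'n ^ 'n) \<times> ('a ^ 'n)) set" where
  "translation_group S = (\<lambda>b. (mat 1, b)) ` S"

lemma subgroup_translation_group:
  assumes "additive_subgroup_set S"
  shows "subgroup (translation_group S) (AGL :: (('a::field ^ 'n ^ 'n) \<times> ('a ^ 'n)) monoid)"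
proof
  show "translation_group S \<subseteq> carrier (AGL :: (('a ^ 'n ^ 'n) \<times> ('a ^ 'n)) monoid)"
    unfolding translation_group_def by (auto simp: invertible_mat_1)
  show "\<one>\<^bsub>AGL\<^esub> \<in> translation_group S"
    using assms unfolding translation_group_def additive_subgroup_set_def by simp
  fix x y assume "x \<in> translation_group S" "y \<in> translation_group S"
  then obtain a b where "x = (mat 1, a)" "y = (mat 1, b)" "a \<in> S" "b \<in> S"
    unfolding translation_group_def by blast
  with assms show "x \<otimes>\<^bsub>AGL\<^esub> y \<in> translation_group S" "inv\<^bsub>AGL\<^esub> x \<in> translation_group S"
    unfolding translation_group_def additive_subgroup_set_def
    by (auto simp: AGL_inv invertible_mat_1 add.commute)
qed

lemma normal_translation_group_UNIV:
  "translation_group UNIV \<lhd> (AGL :: (('a::field ^ 'n ^ 'n) \<times> ('a ^ 'n)) monoid)"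
proof -
  interpret group "AGL :: (('a ^ 'n ^ 'n) \<times> ('a ^ 'n)) monoid" by (rule group_AGL)
  show ?thesis
  proof (rule normal_invI)
    show "subgroup (translation_group UNIV) AGL"
      by (rule subgroup_translation_group) (simp add: additive_subgroup_set_def)
    fix x h :: "('a ^ 'n ^ 'n) \<times> ('a ^ 'n)"
    assume x: "x \<in> carrier AGL" and "h \<in> translation_group UNIV"
    then obtain d where h: "h = (mat 1, d)"
      unfolding translation_group_def by blast
    obtain Y e where y: "inv\<^bsub>AGL\<^esub> x = (Y, e)" "invertible Y"
      using inv_closed[OF x] by (cases "inv\<^bsub>AGL\<^esub> x") auto
    have "x \<otimes>\<^bsub>AGL\<^esub> h \<otimes>\<^bsub>AGL\<^esub> inv\<^bsub>AGL\<^esub> x = inv\<^bsub>AGL\<^esub> (Y, e) \<otimes>\<^bsub>AGL\<^esub> (mat 1, d) \<otimes>\<^bsub>AGL\<^esub> (Y, e)"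
      using x by (simp add: h y(1)[symmetric])
    then show "x \<otimes>\<^bsub>AGL\<^esub> h \<otimes>\<^bsub>AGL\<^esub> inv\<^bsub>AGL\<^esub> x \<in> translation_group UNIV"
      unfolding translation_group_def by (simp add: AGL_conj_translation y(2))
  qed
qed

lemma exists_conj_translation_in_translation_group:
  fixes S :: "('a::field^'n) set"
  assumes "additive_subgroup_set S" "s \<in> S" "s \<noteq> 0" "t \<in> translation_group UNIV"
  shows "\<exists>x\<in>carrier AGL. inv\<^bsub>AGL\<^esub> x \<otimes>\<^bsub>AGL\<^esub> t \<otimes>\<^bsub>AGL\<^esub> x \<in> translation_group S"
proof -
  obtain d where t: "t = (mat 1, d)" using assms(4) unfolding translation_group_def by blast
  obtain X where X: "invertible X" "matrix_inv X *v d \<in> S"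
  proof (cases "d = 0")
    case True
    then show thesis
      using that[of "mat 1"] assms(1) by (simp add: invertible_mat_1 additive_subgroup_set_def)
  next
    case False
    then obtain X where "invertible X" "X *v s = d"
      using invertible_matrix_maps_nonzero assms(3) by metis
    then have "matrix_inv X *v d = s"
      by (metis matrix_vector_mul_assoc matrix_inv_left matrix_vector_mul_lid)
    then show thesis using that \<open>invertible X\<close> assms(2) by simp
  qed
  then show ?thesis unfolding t translation_group_def
    by (intro bexI[of _ "(X, 0)"]) (simp_all add: AGL_conj_translation)
qed

lemma card_translation_group: "card (translation_group S) = card S"
  unfolding translation_group_def by (rule card_image) (simp add: inj_on_def)

lemma intersection_density_translation_group:
  fixes S :: "('a::{field,finite}^'n) set"
  assumes "additive_subgroup_set S" "s \<in> S" "s \<noteq> 0"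
  shows "intersection_density AGL (translation_group S) = CARD('a^'n) / card S"
proof -
  interpret group "AGL :: (('a ^ 'n ^ 'n) \<times> ('a ^ 'n)) monoid" by (rule group_AGL)
  have "finite (carrier (AGL :: (('a ^ 'n ^ 'n) \<times> ('a ^ 'n)) monoid))" by simp
  moreover have "translation_group S \<subseteq> translation_group UNIV"
    unfolding translation_group_def by blast
  ultimately show ?thesis
    using intersection_density_normal_subgroup[OF _ normal_translation_group_UNIV]
      exists_conj_translation_in_translation_group[OF assms]
    by (simp add: card_translation_group)
qed

theorem theorem1p2:
  fixes p k i :: nat
  assumes "prime p" and "k \<ge> 1"
    and "CARD('a::{field,finite}) = p ^ k"
    and "1 \<le> i" and "i \<le> k * CARD('n::finite)"
  shows "real p ^ (k * CARD('n) - i)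
           \<in> intersection_spectrum (AGL :: (('a ^ 'n ^ 'n) \<times> ('a ^ 'n)) monoid)"
proof -
  have p: "CHAR('a) = p" using CHAR_of_card_prime_power assms(1,3) by blast
  have card_V: "CARD('a^'n) = p ^ (k * CARD('n))" by (simp add: assms(3) power_mult)
  then have "p ^ i \<le> CARD('a^'n)"
    using assms(5) prime_gt_0_nat[OF assms(1)] by (simp add: power_increasing)
  then obtain S :: "('a^'n) set" where S: "additive_subgroup_set S" "card S = p ^ i"
    using additive_subgroup_set_card_CHAR_power p by metis
  have "card S > 1" using S(2) assms(4) one_less_power[OF prime_gt_1_nat[OF assms(1)], of i] by simp
  then have "\<not> S \<subseteq> {0}" using card_mono[of "{0}" S] by force
  then obtain s where s: "s \<in> S" "s \<noteq> 0" by blast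
  have "intersection_density AGL (translation_group S) = real p ^ (k * CARD('n) - i)"
    using intersection_density_translation_group[OF S(1) s] assms(5) prime_gt_0_nat[OF assms(1)]
    by (simp add: assms(3) S(2) power_mult power_diff)
  then show ?thesis
    unfolding intersection_spectrum_def using subgroup_translation_group[OF S(1)] by force
qed

end
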